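(* Let $G$ be a simple cubic graph, and let $(G',r)$ be constructed from $G$ as described in the context. Then $\kappa(G',r)=\tau(G)+|E(G)|$, where $\tau(G)$ is the minimum size of a vertex cover of $G$.
   Context: Construction of $G'$ from a cubic graph $G$: start with $G$. (1) For each edge $e=xy$ of $G$, delete $xy$, add three new vertices $w_{x,e},w_e,w_{y,e}$ and the edges $xw_{x,e}, w_{x,e}w_e, w_ew_{y,e}, w_{y,e}y$. (2) For each edge $e=xy$ of $G$, add two new vertices $z_{x,e},z_{y,e}$ and the edges $w_{x,e}z_{x,e}, z_{x,e}w_e, w_ez_{y,e}, z_{y,e}w_{y,e}$ (so $\{w_{x,e},w_e,z_{x,e}\}$ and $\{w_{y,e},w_e,z_{y,e}\}$ induce triangles). (3) For every vertex $x$ of $G$ with incident edges $e,f,g$, add the edges $w_{x,e}w_{x,f}, w_{x,e}w_{x,g}, w_{x,f}w_{x,g}$. Requirements: for every edge $e=xy$ of $G$, $r(w_{x,e})=r(w_{y,e})=4$ and $r(w_e)=3$; $r(v')=0$ for all other vertices $v'$ of $G'$. For a graph $H$, a set $S\subseteq V(H)$ and $v\in V(H)\setminus S$, a $v$--$S$ fan of order $k$ is a collection of $k$ paths, each connecting $v$ to a vertex of $S$, pairwise vertex-disjoint except at $v$; $v$ is $k$-linked to $S$ if such a fan exists. A vector connectivity set for $(H,r)$ is a set $S$ such that every $v\in V(H)\setminus S$ is $r(v)$-linked to $S$; $\kappa(H,r)$ is the minimum size of such a set. A vertex cover of $G$ is a set of vertices containing an endpoint of every edge. *)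

theory Defs
  imports Main
begin

definition simple_graph :: "'a set \<Rightarrow> 'a set set \<Rightarrow> bool" where
  "simple_graph V E \<longleftrightarrow> finite V \<and> (\<forall>e\<in>E. e \<subseteq> V \<and> card e = 2)"

definition degree :: "'a set set \<Rightarrow> 'a \<Rightarrow> nat" where
  "degree E v = card {e\<in>E. v \<in> e}"

definition cubic_graph :: "'a set \<Rightarrow> 'a set set \<Rightarrow> bool" where
  "cubic_graph V E \<longleftrightarrow> simple_graph V E \<and> (\<forall>v\<in>V. degree E v = 3)"

definition vertex_cover :: "'a set \<Rightarrow> 'a set set \<Rightarrow> 'a set \<Rightarrow> bool" where
  "vertex_cover V E C \<longleftrightarrow> C \<subseteq> V \<and> (\<forall>e\<in>E. e \<inter> C \<noteq> {})"

definition tau :: "'a set \<Rightarrow> 'a set set \<Rightarrow> nat" where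
  "tau V E = Min {card C | C. vertex_cover V E C}"

definition is_path :: "'b set \<Rightarrow> 'b set set \<Rightarrow> 'b list \<Rightarrow> bool" where
  "is_path VH EH p \<longleftrightarrow> p \<noteq> [] \<and> distinct p \<and> set p \<subseteq> VH \<and>
     (\<forall>i. Suc i < length p \<longrightarrow> {p ! i, p ! Suc i} \<in> EH)"

definition is_fan :: "'b set \<Rightarrow> 'b set set \<Rightarrow> 'b \<Rightarrow> 'b set \<Rightarrow> 'b list set \<Rightarrow> nat \<Rightarrow> bool" where
  "is_fan VH EH v S P k \<longleftrightarrow> finite P \<and> card P = k \<and>
     (\<forall>p\<in>P. is_path VH EH p \<and> hd p = v \<and> last p \<in> S) \<and>
     (\<forall>p\<in>P. \<forall>q\<in>P. p \<noteq> q \<longrightarrow> set p \<inter> set q = {v})"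

definition k_linked :: "'b set \<Rightarrow> 'b set set \<Rightarrow> 'b \<Rightarrow> 'b set \<Rightarrow> nat \<Rightarrow> bool" where
  "k_linked VH EH v S k \<longleftrightarrow> (\<exists>P. is_fan VH EH v S P k)"

definition vc_set :: "'b set \<Rightarrow> 'b set set \<Rightarrow> ('b \<Rightarrow> nat) \<Rightarrow> 'b set \<Rightarrow> bool" where
  "vc_set VH EH r S \<longleftrightarrow> S \<subseteq> VH \<and> (\<forall>v\<in>VH - S. k_linked VH EH v S (r v))"

definition kappa :: "'b set \<Rightarrow> 'b set set \<Rightarrow> ('b \<Rightarrow> nat) \<Rightarrow> nat" where
  "kappa VH EH r = Min {card S | S. vc_set VH EH r S}"

text \<open>Orig x = x; WX x e = w_{x,e}; WE e = w_e; ZX x e = z_{x,e}.\<close>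
datatype 'a gvert = Orig 'a | WX 'a "'a set" | WE "'a set" | ZX 'a "'a set"

definition G'_V :: "'a set \<Rightarrow> 'a set set \<Rightarrow> 'a gvert set" where
  "G'_V V E = Orig ` V \<union> {WX x e | x e. e \<in> E \<and> x \<in> e} \<union> WE ` E
      \<union> {ZX x e | x e. e \<in> E \<and> x \<in> e}"

definition G'_E :: "'a set \<Rightarrow> 'a set set \<Rightarrow> 'a gvert set set" where
  "G'_E V E =
      {{Orig x, WX x e} | x e. e \<in> E \<and> x \<in> e}
    \<union> {{WX x e, WE e} | x e. e \<in> E \<and> x \<in> e}
    \<union> {{WX x e, ZX x e} | x e. e \<in> E \<and> x \<in> e}
    \<union> {{ZX x e, WE e} | x e. e \<in> E \<and> x \<in> e}
    \<union> {{WX x e, WX x f} | x e f. e \<in> E \<and> f \<in> E \<and> x \<in> e \<and> x \<in> f \<and> e \<noteq> f}"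

fun G'_r :: "'a gvert \<Rightarrow> nat" where
  "G'_r (WX x e) = 4"
| "G'_r (WE e) = 3"
| "G'_r (Orig x) = 0"
| "G'_r (ZX x e) = 0"

end

(*
  Let S be a vector connectivity set of G'. For an edge e = xy, if none of w_e, z_{x,e}, z_{y,e}
  is in S, the three paths of a fan at w_e all pass through w_{x,e} or w_{y,e}; and if none of
  x, w_{x,e}, z_{x,e} is in S, the four paths of a fan at w_{x,e} all pass through w_e, w_{x,f}
  or w_{x,g}, where f, g are the other edges at x. Hence the gadget of every edge contains a
  vertex of S, and two if neither endpoint of the edge lies in S. Adding one endpoint of each
  edge of the second kind to the original vertices in S gives a vertex cover, so
  |S| >= tau(G) + |E(G)|.

  Conversely, a vertex cover C together with, for each edge, z_{x,e} at its endpoint x outside C,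
  or w_e if both endpoints are in C, is a vector connectivity set of size |C| + |E(G)|: the
  required fans at w_e and w_{x,e} can be written down explicitly.
*)

theory Submission
  imports Defs
begin

text \<open>The recursive form of \<open>is_path\<close> without distinctness, so that explicitly given paths
  can be checked by simplification.\<close>

fun walk :: "'b set \<Rightarrow> 'b set set \<Rightarrow> 'b list \<Rightarrow> bool" where
  "walk VH EH [] = False"
| "walk VH EH [a] = (a \<in> VH)"
| "walk VH EH (a # b # p) = (a \<in> VH \<and> {a, b} \<in> EH \<and> walk VH EH (b # p))"

lemma all_Suc_less_Suc_Suc:
  "(\<forall>i. Suc i < Suc (Suc n) \<longrightarrow> P i) \<longleftrightarrow> P 0 \<and> (\<forall>i. Suc i < Suc n \<longrightarrow> P (Suc i))"
  by (metis Suc_less_eq not0_implies_Suc zero_less_Suc)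

lemma is_path_Cons_Cons:
  "is_path VH EH (a # b # p) \<longleftrightarrow>
     a \<in> VH \<and> a \<notin> set (b # p) \<and> {a, b} \<in> EH \<and> is_path VH EH (b # p)"
  unfolding is_path_def length_Cons all_Suc_less_Suc_Suc by auto

lemma is_path_iff_walk: "is_path VH EH p \<longleftrightarrow> walk VH EH p \<and> distinct p"
  by (induction VH EH p rule: walk.induct) (auto simp: is_path_Cons_Cons, auto simp: is_path_def)

lemma k_linked_0: "k_linked VH EH v S 0"
  unfolding k_linked_def is_fan_def by (rule exI[of _ "{}"]) simp

lemma k_linked_if_tails:
  assumes tails: "\<forall>t\<in>set ts. t \<noteq> [] \<and> walk VH EH (v # t) \<and> last t \<in> S"
    and dist: "distinct (v # concat ts)"
  shows "k_linked VH EH v S (length ts)"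
proof -
  have "[] \<notin> set ts" using tails by blast
  then have dts: "distinct ts"
    and disj: "\<forall>t\<in>set ts. \<forall>u\<in>set ts. t \<noteq> u \<longrightarrow> set t \<inter> set u = {}"
    and dt: "\<forall>t\<in>set ts. distinct t"
    using dist removeAll_id[of "[]" ts] by (simp_all add: distinct_concat_iff)
  define P where "P = (Cons v) ` set ts"
  have "is_fan VH EH v S P (length ts)"
    unfolding is_fan_def
  proof (intro conjI ballI impI)
    show "finite P" "card P = length ts"
      unfolding P_def by (simp_all add: card_image distinct_card[OF dts])
  next
    fix p assume "p \<in> P"
    then obtain t where t: "t \<in> set ts" "p = v # t" unfolding P_def by blast
    then show "is_path VH EH p" "hd p = v" "last p \<in> S"
      using tails dt dist by (auto simp: is_path_iff_walk)
  next
    fix p q assume "p \<in> P" "q \<in> P" "p \<noteq> q"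
    then obtain t u where "t \<in> set ts" "u \<in> set ts" "p = v # t" "q = v # u"
      unfolding P_def by blast
    with disj \<open>p \<noteq> q\<close> show "set p \<inter> set q = {v}" by auto
  qed
  then show ?thesis unfolding k_linked_def by blast
qed

lemma fan_order_le_card:
  assumes fan: "is_fan VH EH v S P k" and "finite A"
    and hits: "\<forall>p\<in>P. \<exists>a\<in>set p. a \<noteq> v \<and> a \<in> A"
  shows "k \<le> card A"
proof -
  define g where "g p = (SOME a. a \<in> set p \<and> a \<noteq> v \<and> a \<in> A)" for p
  have g: "g p \<in> set p \<and> g p \<noteq> v \<and> g p \<in> A" if "p \<in> P" for p
    using hits that unfolding g_def by (metis (mono_tags, lifting) someI_ex)
  have "inj_on g P"
  proof (rule inj_onI)
    fix p q assume pq: "p \<in> P" "q \<in> P" "g p = g q"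
    show "p = q"
    proof (rule ccontr)
      assume "p \<noteq> q"
      then have "set p \<inter> set q = {v}" using fan pq unfolding is_fan_def by blast
      moreover have "g p \<in> set p \<inter> set q" using g[of p] g[of q] pq by simp
      ultimately show False using g pq(1) by auto
    qed
  qed
  moreover have "g ` P \<subseteq> A" using g by blast
  ultimately have "card P \<le> card A" using card_inj_on_le \<open>finite A\<close> by blast
  then show ?thesis using fan unfolding is_fan_def by simp
qed

lemma is_path_from_outsideE:
  assumes "is_path VH EH p" "hd p = v" "last p \<in> S" "v \<notin> S"
  obtains u q where "p = v # u # q" "{v, u} \<in> EH" "v \<notin> set (u # q)"
    "is_path VH EH (u # q)" "last (u # q) \<in> S"
proof -
  obtain q' where p: "p = v # q'" using assms(1,2) unfolding is_path_def by (cases p) auto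
  then obtain u q where "q' = u # q" using assms(3,4) by (cases q') auto
  with p assms(1,3) show ?thesis
    using that by (auto simp: is_path_iff_walk)
qed

lemma finite_vc_set_cards:
  assumes "finite VH"
  shows "finite {card S | S. vc_set VH EH r S}"
proof (rule finite_subset)
  show "{card S | S. vc_set VH EH r S} \<subseteq> card ` Pow VH" unfolding vc_set_def by auto
qed (use assms in simp)

lemma kappa_le_card: "finite VH \<Longrightarrow> vc_set VH EH r S \<Longrightarrow> kappa VH EH r \<le> card S"
  unfolding kappa_def using finite_vc_set_cards by (intro Min_le) auto

lemma kappa_attained:
  assumes "finite VH" "vc_set VH EH r S"
  obtains S' where "vc_set VH EH r S'" "card S' = kappa VH EH r"
proof -
  have "kappa VH EH r \<in> {card S | S. vc_set VH EH r S}"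
    unfolding kappa_def using assms finite_vc_set_cards by (intro Min_in) auto
  then obtain S' where "vc_set VH EH r S'" "card S' = kappa VH EH r" by auto
  then show ?thesis by (rule that)
qed

lemma simple_graph_finite_edges: "simple_graph V E \<Longrightarrow> finite E"
  unfolding simple_graph_def by (meson Pow_iff finite_Pow_iff rev_finite_subset subsetI)

lemma simple_graph_edge_other_end:
  assumes "simple_graph V E" "e \<in> E" "x \<in> e"
  obtains y where "e = {x, y}" "x \<noteq> y" "y \<in> V"
proof -
  have "card e = 2" "e \<subseteq> V" using assms unfolding simple_graph_def by auto
  then obtain a b where "e = {a, b}" "a \<noteq> b" by (meson card_2_iff)
  with assms(3) \<open>e \<subseteq> V\<close> that show ?thesis by auto
qed

lemma cubic_graph_other_edges:
  assumes "cubic_graph V E" "e \<in> E" "x \<in> e"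
  obtains f g where "f \<in> E" "g \<in> E" "x \<in> f" "x \<in> g" "e \<noteq> f" "e \<noteq> g" "f \<noteq> g"
    and "{h \<in> E. x \<in> h} = {e, f, g}"
proof -
  have "x \<in> V" using assms unfolding cubic_graph_def simple_graph_def by auto
  then have "card {h \<in> E. x \<in> h} = 3" using assms unfolding cubic_graph_def degree_def by auto
  then obtain a b c where abc: "{h \<in> E. x \<in> h} = {a, b, c}" "a \<noteq> b" "b \<noteq> c" "a \<noteq> c"
    by (meson card_3_iff)
  moreover have "e \<in> {a, b, c}" using abc(1) assms(2,3) by blast
  ultimately consider "e = a" | "e = b" | "e = c" by blast
  then show ?thesis
  proof cases
    case 1 with abc that[of b c] show ?thesis by auto
  next
    case 2 with abc that[of a c] show ?thesis by auto
  next
    case 3 with abc that[of a b] show ?thesis by auto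
  qed
qed

lemma finite_vertex_cover_cards:
  assumes "finite V"
  shows "finite {card C | C. vertex_cover V E C}"
proof (rule finite_subset)
  show "{card C | C. vertex_cover V E C} \<subseteq> card ` Pow V" unfolding vertex_cover_def by auto
qed (use assms in simp)

lemma tau_le_card: "finite V \<Longrightarrow> vertex_cover V E C \<Longrightarrow> tau V E \<le> card C"
  unfolding tau_def using finite_vertex_cover_cards by (intro Min_le) auto

lemma tau_attained:
  assumes "simple_graph V E"
  obtains C where "vertex_cover V E C" "card C = tau V E"
proof -
  have "e \<inter> V = e" "e \<noteq> {}" if "e \<in> E" for e
    using assms that unfolding simple_graph_def by auto
  then have "vertex_cover V E V" unfolding vertex_cover_def by simp
  moreover have "finite V" using assms unfolding simple_graph_def by simp
  ultimately have "tau V E \<in> {card C | C. vertex_cover V E C}"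
    unfolding tau_def using finite_vertex_cover_cards by (intro Min_in) auto
  then obtain C where "vertex_cover V E C" "card C = tau V E" by auto
  then show ?thesis by (rule that)
qed

lemma G'_V_memI [simp]:
  "x \<in> V \<Longrightarrow> Orig x \<in> G'_V V E"
  "e \<in> E \<Longrightarrow> WE e \<in> G'_V V E"
  "e \<in> E \<Longrightarrow> x \<in> e \<Longrightarrow> WX x e \<in> G'_V V E"
  "e \<in> E \<Longrightarrow> x \<in> e \<Longrightarrow> ZX x e \<in> G'_V V E"
  unfolding G'_V_def by blast+

lemma G'_E_memI [simp]:
  assumes "e \<in> E" "x \<in> e"
  shows "{Orig x, WX x e} \<in> G'_E V E" "{WX x e, Orig x} \<in> G'_E V E"
    "{WX x e, WE e} \<in> G'_E V E" "{WE e, WX x e} \<in> G'_E V E"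
    "{WX x e, ZX x e} \<in> G'_E V E" "{ZX x e, WX x e} \<in> G'_E V E"
    "{ZX x e, WE e} \<in> G'_E V E" "{WE e, ZX x e} \<in> G'_E V E"
proof -
  have "{Orig x, WX x e} \<in> G'_E V E"
    unfolding G'_E_def by (rule UnI1, rule UnI1, rule UnI1, rule UnI1) (use assms in blast)
  moreover have "{WX x e, WE e} \<in> G'_E V E"
    unfolding G'_E_def by (rule UnI1, rule UnI1, rule UnI1, rule UnI2) (use assms in blast)
  moreover have "{WX x e, ZX x e} \<in> G'_E V E"
    unfolding G'_E_def by (rule UnI1, rule UnI1, rule UnI2) (use assms in blast)
  moreover have "{ZX x e, WE e} \<in> G'_E V E"
    unfolding G'_E_def by (rule UnI1, rule UnI2) (use assms in blast)
  ultimately show "{Orig x, WX x e} \<in> G'_E V E" "{WX x e, Orig x} \<in> G'_E V E"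
    "{WX x e, WE e} \<in> G'_E V E" "{WE e, WX x e} \<in> G'_E V E"
    "{WX x e, ZX x e} \<in> G'_E V E" "{ZX x e, WX x e} \<in> G'_E V E"
    "{ZX x e, WE e} \<in> G'_E V E" "{WE e, ZX x e} \<in> G'_E V E"
    by (simp_all add: insert_commute)
qed

lemma G'_E_WX_WX [simp]:
  "e \<in> E \<Longrightarrow> f \<in> E \<Longrightarrow> x \<in> e \<Longrightarrow> x \<in> f \<Longrightarrow> e \<noteq> f \<Longrightarrow> {WX x e, WX x f} \<in> G'_E V E"
  unfolding G'_E_def by blast

lemma G'_neighbour_WE: "{WE e, b} \<in> G'_E V E \<Longrightarrow> \<exists>x\<in>e. b = WX x e \<or> b = ZX x e"
  unfolding G'_E_def by (auto simp: doubleton_eq_iff)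

lemma G'_neighbour_ZX: "{ZX x e, b} \<in> G'_E V E \<Longrightarrow> b = WX x e \<or> b = WE e"
  unfolding G'_E_def by (auto simp: doubleton_eq_iff)

lemma G'_neighbour_Orig: "{Orig x, b} \<in> G'_E V E \<Longrightarrow> \<exists>f\<in>E. x \<in> f \<and> b = WX x f"
  unfolding G'_E_def by (auto simp: doubleton_eq_iff)

lemma G'_neighbour_WX: "{WX x e, b} \<in> G'_E V E \<Longrightarrow>
   b = Orig x \<or> b = WE e \<or> b = ZX x e \<or> (\<exists>f\<in>E. x \<in> f \<and> f \<noteq> e \<and> b = WX x f)"
  unfolding G'_E_def by (auto simp: doubleton_eq_iff)

lemma finite_G'_V:
  assumes "simple_graph V E"
  shows "finite (G'_V V E)"
proof -
  have fV: "finite V" and fE: "finite E"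
    using assms simple_graph_finite_edges unfolding simple_graph_def by auto
  have "\<And>e x. e \<in> E \<Longrightarrow> x \<in> e \<Longrightarrow> x \<in> V" using assms unfolding simple_graph_def by auto
  then have "{WX x e | x e. e \<in> E \<and> x \<in> e} \<subseteq> case_prod WX ` (V \<times> E)"
    and "{ZX x e | x e. e \<in> E \<and> x \<in> e} \<subseteq> case_prod ZX ` (V \<times> E)" by auto
  with fV fE show ?thesis unfolding G'_V_def by (meson finite_Un finite_SigmaI finite_imageI finite_subset)
qed

lemma vc_set_G'_linked:
  assumes "vc_set (G'_V V E) (G'_E V E) G'_r S" "v \<in> G'_V V E" "v \<notin> S"
  shows "k_linked (G'_V V E) (G'_E V E) v S (G'_r v)"
  using assms unfolding vc_set_def by blast

lemma vc_set_G'_hits_WE_ZX: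
  assumes vc: "vc_set (G'_V V E) (G'_E V E) G'_r S" and e: "e \<in> E" "card e = 2"
  shows "WE e \<in> S \<or> (\<exists>x\<in>e. ZX x e \<in> S)"
proof (rule ccontr)
  assume "\<not> ?thesis"
  then have nW: "WE e \<notin> S" and nZ: "\<forall>x\<in>e. ZX x e \<notin> S" by auto
  have "k_linked (G'_V V E) (G'_E V E) (WE e) S 3"
    using vc_set_G'_linked[OF vc _ nW] e by simp
  then obtain P where fan: "is_fan (G'_V V E) (G'_E V E) (WE e) S P 3"
    unfolding k_linked_def by blast
  have "\<forall>p\<in>P. \<exists>a\<in>set p. a \<noteq> WE e \<and> a \<in> (\<lambda>x. WX x e) ` e"
  proof
    fix p assume "p \<in> P"
    have p: "is_path (G'_V V E) (G'_E V E) p" "hd p = WE e" "last p \<in> S"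
      using fan \<open>p \<in> P\<close> unfolding is_fan_def by auto
    then obtain u q where uq: "p = WE e # u # q" "{WE e, u} \<in> G'_E V E" "WE e \<notin> set (u # q)"
      "is_path (G'_V V E) (G'_E V E) (u # q)" "last (u # q) \<in> S"
      using nW by (rule is_path_from_outsideE)
    from G'_neighbour_WE[OF uq(2)] obtain x where x: "x \<in> e" "u = WX x e \<or> u = ZX x e"
      by blast
    show "\<exists>a\<in>set p. a \<noteq> WE e \<and> a \<in> (\<lambda>x. WX x e) ` e"
    proof (cases "u = ZX x e")
      case True
      with nZ x have "u \<notin> S" by auto
      with uq(4,5) obtain w q' where wq: "u # q = u # w # q'" "{u, w} \<in> G'_E V E"
        by (rule is_path_from_outsideE[OF _ list.sel(1)])
      with True G'_neighbour_ZX uq(3) have "w = WX x e" by fastforce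
      with wq uq(1) x show ?thesis by auto
    next
      case False
      with uq(1) x show ?thesis by auto
    qed
  qed
  moreover have "finite e" using e(2) by (metis card.infinite zero_neq_numeral)
  ultimately have "3 \<le> card ((\<lambda>x. WX x e) ` e)" by (intro fan_order_le_card[OF fan]) simp_all
  also have "\<dots> \<le> 2" using card_image_le[OF \<open>finite e\<close>] e(2) by metis
  finally show False by simp
qed

lemma vc_set_G'_hits_Orig_WX_ZX:
  assumes vc: "vc_set (G'_V V E) (G'_E V E) G'_r S" and cub: "cubic_graph V E"
    and e: "e \<in> E" "x \<in> e"
  shows "Orig x \<in> S \<or> WX x e \<in> S \<or> ZX x e \<in> S"
proof (rule ccontr)
  assume "\<not> ?thesis"
  then have nO: "Orig x \<notin> S" and nW: "WX x e \<notin> S" and nZ: "ZX x e \<notin> S" by auto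
  obtain f g where at_x: "{h \<in> E. x \<in> h} = {e, f, g}"
    using cubic_graph_other_edges[OF cub e] by metis
  define A where "A = {WE e, WX x f, WX x g}"
  have other_WX: "WX x h \<in> A" if "h \<in> E" "x \<in> h" "h \<noteq> e" for h
    using at_x that unfolding A_def by blast
  have "k_linked (G'_V V E) (G'_E V E) (WX x e) S 4"
    using vc_set_G'_linked[OF vc _ nW] e by simp
  then obtain P where fan: "is_fan (G'_V V E) (G'_E V E) (WX x e) S P 4"
    unfolding k_linked_def by blast
  have "\<forall>p\<in>P. \<exists>a\<in>set p. a \<noteq> WX x e \<and> a \<in> A"
  proof
    fix p assume "p \<in> P"
    have p: "is_path (G'_V V E) (G'_E V E) p" "hd p = WX x e" "last p \<in> S"
      using fan \<open>p \<in> P\<close> unfolding is_fan_def by auto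
    then obtain u q where uq: "p = WX x e # u # q" "{WX x e, u} \<in> G'_E V E"
      "WX x e \<notin> set (u # q)" "is_path (G'_V V E) (G'_E V E) (u # q)" "last (u # q) \<in> S"
      using nW by (rule is_path_from_outsideE)
    have second: "\<exists>w q'. q = w # q' \<and> {u, w} \<in> G'_E V E" if "u \<notin> S"
      using is_path_from_outsideE[OF uq(4) list.sel(1) uq(5) that] by blast
    from G'_neighbour_WX[OF uq(2)] consider "u = Orig x" | "u = WE e" | "u = ZX x e"
      | h where "h \<in> E" "x \<in> h" "h \<noteq> e" "u = WX x h"
      by blast
    then show "\<exists>a\<in>set p. a \<noteq> WX x e \<and> a \<in> A"
    proof cases
      case 1
      with nO second obtain w q' where wq: "q = w # q'" "{Orig x, w} \<in> G'_E V E" by auto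
      from G'_neighbour_Orig[OF wq(2)] obtain h where "h \<in> E" "x \<in> h" "w = WX x h"
        by blast
      with wq(1) uq(1,3) other_WX show ?thesis by auto
    next
      case 3
      with nZ second obtain w q' where wq: "q = w # q'" "{ZX x e, w} \<in> G'_E V E" by auto
      from G'_neighbour_ZX[OF wq(2)] uq(1,3) wq(1) have "w = WE e" by auto
      with uq(1) wq(1) show ?thesis unfolding A_def by simp
    qed (use uq(1) other_WX in \<open>auto simp: A_def\<close>)
  qed
  then have "4 \<le> card A" by (rule fan_order_le_card[OF fan, rotated]) (simp add: A_def)
  also have "\<dots> \<le> 3" using card_length[of "[WE e, WX x f, WX x g]"] by (simp add: A_def)
  finally show False by simp
qed

lemma tau_le_card_plus_uncovered:
  assumes G: "simple_graph V E" and "T \<subseteq> V"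
  shows "tau V E \<le> card T + card {e \<in> E. e \<inter> T = {}}"
proof -
  define U where "U = {e \<in> E. e \<inter> T = {}}"
  define C where "C = T \<union> (\<lambda>e. SOME x. x \<in> e) ` U"
  have pick: "(SOME x. x \<in> e) \<in> e \<and> (SOME x. x \<in> e) \<in> V" if "e \<in> E" for e
  proof -
    have "e \<noteq> {}" "e \<subseteq> V" using G that unfolding simple_graph_def by auto
    then show ?thesis by (metis some_in_eq subsetD)
  qed
  have "vertex_cover V E C"
    unfolding vertex_cover_def C_def U_def using \<open>T \<subseteq> V\<close> pick by blast
  then have "tau V E \<le> card C"
    using G unfolding simple_graph_def by (blast intro: tau_le_card)
  also have "\<dots> \<le> card T + card ((\<lambda>e. SOME x. x \<in> e) ` U)"
    unfolding C_def by (rule card_Un_le)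
  also have "\<dots> \<le> card T + card U"
    using simple_graph_finite_edges[OF G] unfolding U_def by (simp add: card_image_le)
  finally show ?thesis unfolding U_def .
qed

definition edge_gadget :: "'a set \<Rightarrow> 'a gvert set" where
  "edge_gadget e = insert (WE e) ((\<lambda>x. WX x e) ` e \<union> (\<lambda>x. ZX x e) ` e)"

lemma card_Orig_vimage_plus_gadgets_le:
  assumes "finite S" "finite E"
  shows "card (Orig -` S) + (\<Sum>e\<in>E. card (S \<inter> edge_gadget e)) \<le> card S"
proof -
  define W where "W = (\<Union>e\<in>E. S \<inter> edge_gadget e)"
  have "(\<Sum>e\<in>E. card (S \<inter> edge_gadget e)) = card W"
    unfolding W_def using assms by (intro card_UN_disjoint[symmetric]) (auto simp: edge_gadget_def)
  moreover have "card (Orig -` S) = card (Orig ` Orig -` S)"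
    by (rule card_image[symmetric]) (simp add: inj_on_def)
  moreover have "card (Orig ` Orig -` S \<union> W) = card (Orig ` Orig -` S) + card W"
    using assms unfolding W_def by (intro card_Un_disjoint) (auto simp: edge_gadget_def)
  moreover have "Orig ` Orig -` S \<union> W \<subseteq> S" unfolding W_def by auto
  ultimately show ?thesis using card_mono[OF \<open>finite S\<close>] by metis
qed

lemma vc_set_G'_card_gadget_ge:
  assumes vc: "vc_set (G'_V V E) (G'_E V E) G'_r S" and cub: "cubic_graph V E"
    and e: "e \<in> E" and "finite S"
  shows "1 + of_bool (e \<inter> Orig -` S = {}) \<le> card (S \<inter> edge_gadget e)"
proof -
  have "card e = 2" using cub e unfolding cubic_graph_def simple_graph_def by auto
  then obtain a b where ab: "e = {a, b}" "a \<noteq> b" by (meson card_2_iff)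
  have fin: "finite (S \<inter> edge_gadget e)" using \<open>finite S\<close> by simp
  show ?thesis
  proof (cases "e \<inter> Orig -` S = {}")
    case True
    have "\<exists>s\<in>S \<inter> edge_gadget e. s = WX y e \<or> s = ZX y e" if "y \<in> e" for y
      using vc_set_G'_hits_Orig_WX_ZX[OF vc cub e that] True that
      unfolding edge_gadget_def by blast
    then obtain sa sb where "sa \<in> S \<inter> edge_gadget e" "sa = WX a e \<or> sa = ZX a e"
      "sb \<in> S \<inter> edge_gadget e" "sb = WX b e \<or> sb = ZX b e"
      using ab by blast
    moreover from this ab(2) have "card {sa, sb} = 2" by auto
    ultimately have "2 \<le> card (S \<inter> edge_gadget e)"
      using card_mono[OF fin, of "{sa, sb}"] by simp
    with True show ?thesis by simp
  next
    case False
    have "S \<inter> edge_gadget e \<noteq> {}"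
      using vc_set_G'_hits_WE_ZX[OF vc e \<open>card e = 2\<close>] unfolding edge_gadget_def by blast
    with False fin show ?thesis by (simp add: Suc_le_eq card_gt_0_iff)
  qed
qed

lemma tau_plus_card_edges_le_card_vc_set:
  assumes cub: "cubic_graph V E" and vc: "vc_set (G'_V V E) (G'_E V E) G'_r S"
  shows "tau V E + card E \<le> card S"
proof -
  have G: "simple_graph V E" using cub unfolding cubic_graph_def by simp
  have fE: "finite E" using simple_graph_finite_edges[OF G] .
  have SV: "S \<subseteq> G'_V V E" using vc unfolding vc_set_def by simp
  then have fS: "finite S" using finite_G'_V[OF G] finite_subset by blast
  have TV: "Orig -` S \<subseteq> V" using SV unfolding G'_V_def by auto
  define U where "U = {e \<in> E. e \<inter> Orig -` S = {}}"
  have "U \<subseteq> E" unfolding U_def by blast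
  then have "card E + card U = (\<Sum>e\<in>E. 1 + of_bool (e \<in> U))"
    using fE by (simp only: sum.distrib) (simp add: Int_absorb1)
  also have "\<dots> \<le> (\<Sum>e\<in>E. card (S \<inter> edge_gadget e))"
    using vc_set_G'_card_gadget_ge[OF vc cub _ fS] unfolding U_def by (intro sum_mono) simp
  finally have "card (Orig -` S) + card E + card U \<le> card S"
    using card_Orig_vimage_plus_gadgets_le[OF fS fE] by simp
  moreover have "tau V E \<le> card (Orig -` S) + card U"
    unfolding U_def by (rule tau_le_card_plus_uncovered[OF G TV])
  ultimately show ?thesis by simp
qed

definition cover_vc_set :: "'a set set \<Rightarrow> 'a set \<Rightarrow> 'a gvert set" where
  "cover_vc_set E C =
     Orig ` C \<union> {ZX x e | x e. e \<in> E \<and> x \<in> e \<and> x \<notin> C} \<union> WE ` {e \<in> E. e \<subseteq> C}"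

lemma card_cover_vc_set_le:
  assumes G: "simple_graph V E" and C: "vertex_cover V E C"
  shows "card (cover_vc_set E C) \<le> card C + card E"
proof -
  define rep where
    "rep e = (if e \<subseteq> C then WE e else ZX (SOME x. x \<in> e \<and> x \<notin> C) e)" for e
  have "ZX x e \<in> rep ` E" if xe: "e \<in> E" "x \<in> e" "x \<notin> C" for x e
  proof -
    obtain y where y: "e = {x, y}" "x \<noteq> y" using simple_graph_edge_other_end[OF G xe(1,2)] .
    with C xe have "y \<in> C" unfolding vertex_cover_def by auto
    with y xe have "(SOME x. x \<in> e \<and> x \<notin> C) = x" by (intro some_equality) auto
    with xe show ?thesis unfolding rep_def by (auto intro!: image_eqI[of _ _ e])
  qed
  then have "cover_vc_set E C \<subseteq> Orig ` C \<union> rep ` E"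
    unfolding cover_vc_set_def rep_def by auto
  moreover have "finite C" "finite E"
    using G C simple_graph_finite_edges unfolding simple_graph_def vertex_cover_def
    by (auto intro: finite_subset)
  ultimately have "card (cover_vc_set E C) \<le> card (Orig ` C) + card (rep ` E)"
    by (meson card_Un_le card_mono finite_UnI finite_imageI le_trans)
  also have "\<dots> \<le> card C + card E" by (intro add_mono card_image_le) fact+
  finally show ?thesis .
qed

lemma k_linked_WE_cover_vc_set:
  assumes cub: "cubic_graph V E" and C: "vertex_cover V E C" and e: "e \<in> E"
    and nS: "WE e \<notin> cover_vc_set E C"
  shows "k_linked (G'_V V E) (G'_E V E) (WE e) (cover_vc_set E C) 3"
proof -
  have G: "simple_graph V E" using cub unfolding cubic_graph_def by simp
  from nS e obtain a where a: "a \<in> e" "a \<notin> C" unfolding cover_vc_set_def by auto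
  obtain b where b: "e = {a, b}" "a \<noteq> b" "b \<in> V"
    using simple_graph_edge_other_end[OF G e a(1)] .
  with C e a have "b \<in> C" unfolding vertex_cover_def by auto
  obtain f where f: "f \<in> E" "a \<in> f" "e \<noteq> f" using cubic_graph_other_edges[OF cub e a(1)] by metis
  let ?ts = "[[ZX a e], [WX a e, WX a f, ZX a f], [WX b e, Orig b]]"
  have "k_linked (G'_V V E) (G'_E V E) (WE e) (cover_vc_set E C) (length ?ts)"
  proof (rule k_linked_if_tails)
    show "\<forall>t\<in>set ?ts. t \<noteq> [] \<and> walk (G'_V V E) (G'_E V E) (WE e # t) \<and> last t \<in> cover_vc_set E C"
      using e f a b \<open>b \<in> C\<close> unfolding cover_vc_set_def by auto
    show "distinct (WE e # concat ?ts)" using f b by auto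
  qed
  then show ?thesis by (simp add: numeral_eq_Suc)
qed

text \<open>The tail, after w_{x,e} with x in C, of a path through the gadget of the edge e = {x, y}
  into the set cover_vc_set E C.\<close>

definition cover_exit :: "'a set \<Rightarrow> 'a set \<Rightarrow> 'a \<Rightarrow> 'a gvert list" where
  "cover_exit C e y = (if y \<in> C then [WE e] else [WE e, ZX y e])"

lemma cover_exit_props:
  assumes "e \<in> E" "x \<in> C" "e = {x, y}" "x \<noteq> y"
  shows "walk (G'_V V E) (G'_E V E) (WX x e # cover_exit C e y)"
    and "last (cover_exit C e y) \<in> cover_vc_set E C"
    and "cover_exit C e y \<noteq> []" "distinct (cover_exit C e y)"
    and "set (cover_exit C e y) \<subseteq> {WE e, ZX y e}"
  using assms unfolding cover_exit_def cover_vc_set_def by auto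

lemma k_linked_WX_cover_vc_set:
  assumes cub: "cubic_graph V E" and C: "vertex_cover V E C" and e: "e \<in> E" "x \<in> e"
  shows "k_linked (G'_V V E) (G'_E V E) (WX x e) (cover_vc_set E C) 4"
proof -
  have G: "simple_graph V E" using cub unfolding cubic_graph_def by simp
  obtain y where y: "e = {x, y}" "x \<noteq> y" "y \<in> V"
    using simple_graph_edge_other_end[OF G e] .
  obtain f g where fg: "f \<in> E" "g \<in> E" "x \<in> f" "x \<in> g" "e \<noteq> f" "e \<noteq> g" "f \<noteq> g"
    using cubic_graph_other_edges[OF cub e] by metis
  have xV: "x \<in> V" using G e unfolding simple_graph_def by auto
  show ?thesis
  proof (cases "x \<in> C")
    case False
    with C e y have "y \<in> C" unfolding vertex_cover_def by auto
    let ?ts = "[[ZX x e], [WE e, WX y e, Orig y], [WX x f, ZX x f], [WX x g, ZX x g]]"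
    have "k_linked (G'_V V E) (G'_E V E) (WX x e) (cover_vc_set E C) (length ?ts)"
    proof (rule k_linked_if_tails)
      show "\<forall>t\<in>set ?ts. t \<noteq> [] \<and> walk (G'_V V E) (G'_E V E) (WX x e # t) \<and> last t \<in> cover_vc_set E C"
        using e fg y xV \<open>y \<in> C\<close> False unfolding cover_vc_set_def by auto
      show "distinct (WX x e # concat ?ts)" using fg y by auto
    qed
    then show ?thesis by (simp add: numeral_eq_Suc)
  next
    case True
    obtain u where u: "f = {x, u}" "x \<noteq> u" using simple_graph_edge_other_end[OF G fg(1,3)] by metis
    obtain u' where u': "g = {x, u'}" "x \<noteq> u'" using simple_graph_edge_other_end[OF G fg(2,4)] by metis
    note exit_e = cover_exit_props[OF e(1) True y(1,2)]
    note exit_f = cover_exit_props[OF fg(1) True u]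
    note exit_g = cover_exit_props[OF fg(2) True u']
    let ?ts = "[[Orig x], cover_exit C e y, WX x f # cover_exit C f u, WX x g # cover_exit C g u']"
    have "k_linked (G'_V V E) (G'_E V E) (WX x e) (cover_vc_set E C) (length ?ts)"
    proof (rule k_linked_if_tails)
      have "Orig x \<in> cover_vc_set E C" using True unfolding cover_vc_set_def by auto
      then show "\<forall>t\<in>set ?ts. t \<noteq> [] \<and> walk (G'_V V E) (G'_E V E) (WX x e # t) \<and> last t \<in> cover_vc_set E C"
        using exit_e exit_f exit_g e fg xV by auto
      show "distinct (WX x e # concat ?ts)" using exit_e exit_f exit_g fg by auto
    qed
    then show ?thesis by (simp add: numeral_eq_Suc)
  qed
qed

lemma vc_set_cover_vc_set:
  assumes cub: "cubic_graph V E" and C: "vertex_cover V E C"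
  shows "vc_set (G'_V V E) (G'_E V E) G'_r (cover_vc_set E C)"
  unfolding vc_set_def
proof (intro conjI ballI)
  show "cover_vc_set E C \<subseteq> G'_V V E"
    using C unfolding cover_vc_set_def vertex_cover_def by auto
next
  fix v assume v: "v \<in> G'_V V E - cover_vc_set E C"
  show "k_linked (G'_V V E) (G'_E V E) v (cover_vc_set E C) (G'_r v)"
  proof (cases v)
    case (WE e)
    with v have "e \<in> E" unfolding G'_V_def by auto
    with WE v show ?thesis using k_linked_WE_cover_vc_set[OF cub C] by simp
  next
    case (WX x e)
    with v have "e \<in> E" "x \<in> e" unfolding G'_V_def by auto
    with WX show ?thesis using k_linked_WX_cover_vc_set[OF cub C] by simp
  qed (simp_all add: k_linked_0)
qed

theorem lemma3:
  fixes V :: "'a set" and E :: "'a set set"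
  assumes "cubic_graph V E"
  shows "kappa (G'_V V E) (G'_E V E) G'_r = tau V E + card E"
proof (rule antisym)
  have G: "simple_graph V E" using assms unfolding cubic_graph_def by simp
  obtain C where C: "vertex_cover V E C" "card C = tau V E" using tau_attained[OF G] .
  have fin: "finite (G'_V V E)" by (rule finite_G'_V[OF G])
  have vc: "vc_set (G'_V V E) (G'_E V E) G'_r (cover_vc_set E C)"
    by (rule vc_set_cover_vc_set[OF assms C(1)])
  have "kappa (G'_V V E) (G'_E V E) G'_r \<le> card (cover_vc_set E C)"
    by (rule kappa_le_card[OF fin vc])
  also have "\<dots> \<le> tau V E + card E" using card_cover_vc_set_le[OF G C(1)] C(2) by simp
  finally show "kappa (G'_V V E) (G'_E V E) G'_r \<le> tau V E + card E" .
  obtain S where "vc_set (G'_V V E) (G'_E V E) G'_r S"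
    and "card S = kappa (G'_V V E) (G'_E V E) G'_r"
    using kappa_attained[OF fin vc] .
  with tau_plus_card_edges_le_card_vc_set[OF assms]
  show "tau V E + card E \<le> kappa (G'_V V E) (G'_E V E) G'_r" by metis
qed

end
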